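(* Let $\mathbb{X}$ be a real reflexive Banach space and $\mathbb{Y}$ a real normed space, $\epsilon\in[0,1)$, and $T,A\in\mathbb{K}(\mathbb{X},\mathbb{Y})$. Suppose $M_T=D\cup(-D)$, where $D$ is a nonempty compact connected subset of $S_{\mathbb{X}}$. Then $T\perp_B^{\epsilon}A$ if and only if there exists $x\in M_T$ such that $\|Tx+\lambda Ax\|^2\ge\|T\|^2-2\epsilon\|T\|\|\lambda A\|$ for all $\lambda\in\mathbb{R}$. Moreover, if in addition $M_T\subseteq M_A$, then $T\perp_B^{\epsilon}A$ if and only if there exists $x\in M_T$ with $Tx\perp_B^{\epsilon}Ax$.
   Context: $\mathbb{K}(\mathbb{X},\mathbb{Y})$ is the space of compact linear operators from $\mathbb{X}$ to $\mathbb{Y}$ with the operator norm. $S_{\mathbb{X}}$ is the unit sphere of $\mathbb{X}$; $M_T=\{x\in S_{\mathbb{X}}:\|Tx\|=\|T\|\}$. For $\epsilon\in[0,1)$ and $u,v$ in a normed space, $u\perp_B^{\epsilon}v$ means $\|u+\lambda v\|^2\ge\|u\|^2-2\epsilon\|u\|\|\lambda v\|$ for all $\lambda\in\mathbb{R}$. *)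

theory Defs
  imports "HOL-Analysis.Analysis"
begin

definition reflexive_space :: "'a::real_normed_vector itself \<Rightarrow> bool" where
  "reflexive_space _ \<longleftrightarrow>
     (\<forall>\<phi> :: ('a \<Rightarrow>\<^sub>L real) \<Rightarrow>\<^sub>L real. \<exists>x::'a.
        \<forall>f. blinfun_apply \<phi> f = blinfun_apply f x)"

definition compact_op :: "('a::real_normed_vector \<Rightarrow>\<^sub>L 'b::real_normed_vector) \<Rightarrow> bool" where
  "compact_op T \<longleftrightarrow> compact (closure (blinfun_apply T ` cball 0 1))"

definition norm_att :: "('a::real_normed_vector \<Rightarrow>\<^sub>L 'b::real_normed_vector) \<Rightarrow> 'a set" where
  "norm_att T = {x \<in> sphere 0 1. norm (blinfun_apply T x) = norm T}"

definition bj_eps_orth :: "real \<Rightarrow> 'a::real_normed_vector \<Rightarrow> 'a \<Rightarrow> bool" where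
  "bj_eps_orth \<epsilon> u v \<longleftrightarrow>
     (\<forall>t::real. (norm (u + t *\<^sub>R v))\<^sup>2 \<ge> (norm u)\<^sup>2 - 2 * \<epsilon> * norm u * norm (t *\<^sub>R v))"

end

theory Submission
  imports Defs
begin

text \<open>If T is \<epsilon>-orthogonal to A, convexity of t \<mapsto> norm (T + t A) turns the quadratic
  inequality into the linear bound norm (T + t A) \<ge> norm T - \<epsilon> norm A t for t > 0.
  Near-maximizers x_n of T + t_n A with t_n \<rightarrow> 0 have a weak cluster point x (reflexivity), and
  compactness of T and A makes (T x, A x) a norm cluster point of (T x_n, A x_n); hence x \<in> M_T and
  norm (T x + s A x) \<ge> norm T - \<epsilon> norm A s for all s > 0. The same holds for -A. The two closed,
  symmetric sets of directions satisfying these one-sided bounds cover M_T and both meet D, so by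
  connectedness of D they share a point, where the bound holds for every real t; squaring it gives
  the pointwise inequality. The converse follows from norm (T x + t A x) \<le> norm (T + t A), and
  when M_T \<subseteq> M_A the pointwise inequality at x says exactly that T x is \<epsilon>-orthogonal to A x.\<close>

section \<open>Norming functionals\<close>

text \<open>Hahn-Banach via Zorn's lemma: partial linear functionals dominated by the norm are
  represented by their graphs, so that extension is just inclusion of sets.\<close>
definition dominated_linear_graph :: "('v::real_normed_vector \<times> real) set \<Rightarrow> bool" where
  "dominated_linear_graph G \<longleftrightarrow>
     (\<forall>x r s. (x, r) \<in> G \<longrightarrow> (x, s) \<in> G \<longrightarrow> r = s)
     \<and> (\<forall>x r y s a. (x, r) \<in> G \<longrightarrow> (y, s) \<in> G \<longrightarrow> (a *\<^sub>R x + y, a * r + s) \<in> G)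
     \<and> (\<forall>x r. (x, r) \<in> G \<longrightarrow> r \<le> norm x)"

lemma dominated_linear_graphD:
  assumes "dominated_linear_graph G"
  shows dominated_linear_graph_unique: "(x, r) \<in> G \<Longrightarrow> (x, s) \<in> G \<Longrightarrow> r = s"
    and dominated_linear_graph_lincomb: "(x, r) \<in> G \<Longrightarrow> (y, s) \<in> G \<Longrightarrow> (a *\<^sub>R x + y, a * r + s) \<in> G"
    and dominated_linear_graph_le_norm: "(x, r) \<in> G \<Longrightarrow> r \<le> norm x"
  using assms unfolding dominated_linear_graph_def by blast+

lemma dominated_linear_graph_line:
  "dominated_linear_graph {(a *\<^sub>R w, a * norm w) | a. True}"
  unfolding dominated_linear_graph_def
proof (intro conjI allI impI)
  fix x r s assume "(x, r) \<in> {(a *\<^sub>R w, a * norm w) | a. True}" "(x, s) \<in> {(a *\<^sub>R w, a * norm w) | a. True}"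
  then obtain a b where "x = a *\<^sub>R w" "r = a * norm w" "x = b *\<^sub>R w" "s = b * norm w" by blast
  then show "r = s"
    by (cases "w = 0") (auto simp: scaleR_cancel_right)
next
  fix x r y s c assume "(x, r) \<in> {(a *\<^sub>R w, a * norm w) | a. True}" "(y, s) \<in> {(a *\<^sub>R w, a * norm w) | a. True}"
  then obtain a b where "x = a *\<^sub>R w" "r = a * norm w" "y = b *\<^sub>R w" "s = b * norm w" by blast
  then have "c *\<^sub>R x + y = (c * a + b) *\<^sub>R w \<and> c * r + s = (c * a + b) * norm w"
    by (simp add: algebra_simps)
  then show "(c *\<^sub>R x + y, c * r + s) \<in> {(a *\<^sub>R w, a * norm w) | a. True}" by blast
next
  fix x r assume "(x, r) \<in> {(a *\<^sub>R w, a * norm w) | a. True}"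
  then show "r \<le> norm x" by (auto simp: mult_right_mono)
qed

lemma dominated_linear_graph_chain_Union:
  assumes "\<And>G. G \<in> C \<Longrightarrow> dominated_linear_graph G" and "chain\<^sub>\<subseteq> C"
  shows "dominated_linear_graph (\<Union>C)"
proof -
  have ch: "X \<subseteq> Y \<or> Y \<subseteq> X" if "X \<in> C" "Y \<in> C" for X Y
    using assms(2) that unfolding chain_subset_def by blast
  have common: "\<exists>G\<in>C. (x, r) \<in> G \<and> (y, s) \<in> G" if "(x, r) \<in> \<Union>C" "(y, s) \<in> \<Union>C" for x r y s
    using that ch by blast
  show ?thesis
    unfolding dominated_linear_graph_def
    using common assms(1)
    by (smt (verit) UnionE UnionI dominated_linear_graphD)
qed

lemma dominated_linear_graph_scaleR:
  assumes "dominated_linear_graph G" "G \<noteq> {}" "(x, r) \<in> G"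
  shows "(a *\<^sub>R x, a * r) \<in> G"
proof -
  obtain y s where "(y, s) \<in> G" using assms(2) by auto
  then have "(0, 0) \<in> G"
    using dominated_linear_graph_lincomb[OF assms(1), of y s y s "-1"] by simp
  then show ?thesis
    using dominated_linear_graph_lincomb[OF assms(1) assms(3), of 0 0 a] by simp
qed

text \<open>The constant c is the value of the extension at the new vector u; it exists since
  r + s \<le> norm (x + y) \<le> norm (x - u) + norm (y + u) for all (x, r), (y, s) in the graph.\<close>
lemma dominated_linear_graph_extension_value:
  assumes G: "dominated_linear_graph G" "G \<noteq> {}"
  obtains c where "\<And>x r. (x, r) \<in> G \<Longrightarrow> r - norm (x - u) \<le> c"
    and "\<And>y s. (y, s) \<in> G \<Longrightarrow> c \<le> norm (y + u) - s"
proof -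
  have key: "r - norm (x - u) \<le> norm (y + u) - s" if "(x, r) \<in> G" "(y, s) \<in> G" for x r y s
  proof -
    have "r + s \<le> norm (x + y)"
      using dominated_linear_graph_le_norm[OF G(1) dominated_linear_graph_lincomb[OF G(1) that, of 1]]
      by simp
    also have "\<dots> \<le> norm (x - u) + norm (y + u)"
      using norm_triangle_ineq[of "x - u" "y + u"] by simp
    finally show ?thesis by simp
  qed
  define S where "S = {r - norm (x - u) | x r. (x, r) \<in> G}"
  obtain y s where ys: "(y, s) \<in> G" using G(2) by auto
  have "S \<noteq> {}" using ys unfolding S_def by blast
  moreover have "bdd_above S"
    unfolding S_def by (rule bdd_aboveI[where M = "norm (y + u) - s"]) (use key ys in auto)
  ultimately show ?thesis
    using key by (intro that[of "Sup S"] cSup_upper cSup_least) (auto simp: S_def)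
qed

definition graph_extension :: "('v::real_normed_vector \<times> real) set \<Rightarrow> 'v \<Rightarrow> real \<Rightarrow> ('v \<times> real) set" where
  "graph_extension G u c = {(x + a *\<^sub>R u, r + a * c) | x r a. (x, r) \<in> G}"

lemma graph_extension_unique:
  assumes G: "dominated_linear_graph G" "G \<noteq> {}" and u: "\<forall>r. (u, r) \<notin> G"
    and v1: "(v, r1) \<in> graph_extension G u c" and v2: "(v, r2) \<in> graph_extension G u c"
  shows "r1 = r2"
proof -
  obtain x r a where 1: "v = x + a *\<^sub>R u" "r1 = r + a * c" "(x, r) \<in> G"
    using v1 unfolding graph_extension_def by blast
  obtain y s b where 2: "v = y + b *\<^sub>R u" "r2 = s + b * c" "(y, s) \<in> G"
    using v2 unfolding graph_extension_def by blast
  have diff: "(y - x, s - r) \<in> G"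
    using dominated_linear_graph_lincomb[OF G(1) 1(3) 2(3), of "-1"] by simp
  have "a = b"
  proof (rule ccontr)
    assume "a \<noteq> b"
    have "(a - b) *\<^sub>R u = y - x"
      using 1(1) 2(1) by (simp add: algebra_simps)
    moreover have "u = inverse (a - b) *\<^sub>R ((a - b) *\<^sub>R u)"
      using \<open>a \<noteq> b\<close> by simp
    ultimately have "u = inverse (a - b) *\<^sub>R (y - x)" by simp
    then show False
      using dominated_linear_graph_scaleR[OF G diff, of "inverse (a - b)"] u by metis
  qed
  then show ?thesis
    using 1 2 dominated_linear_graph_unique[OF G(1)] by auto
qed

lemma graph_extension_lincomb:
  assumes G: "dominated_linear_graph G"
    and v1: "(v1, r1) \<in> graph_extension G u c" and v2: "(v2, r2) \<in> graph_extension G u c"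
  shows "(e *\<^sub>R v1 + v2, e * r1 + r2) \<in> graph_extension G u c"
proof -
  obtain x r a where 1: "v1 = x + a *\<^sub>R u" "r1 = r + a * c" "(x, r) \<in> G"
    using v1 unfolding graph_extension_def by blast
  obtain y s b where 2: "v2 = y + b *\<^sub>R u" "r2 = s + b * c" "(y, s) \<in> G"
    using v2 unfolding graph_extension_def by blast
  have "e *\<^sub>R v1 + v2 = (e *\<^sub>R x + y) + (e * a + b) *\<^sub>R u"
    and "e * r1 + r2 = (e * r + s) + (e * a + b) * c"
    using 1 2 by (simp_all add: algebra_simps)
  then show ?thesis
    using dominated_linear_graph_lincomb[OF G 1(3) 2(3)] unfolding graph_extension_def by blast
qed

lemma graph_extension_le_norm:
  assumes G: "dominated_linear_graph G" "G \<noteq> {}"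
    and c_lower: "\<And>x r. (x, r) \<in> G \<Longrightarrow> r - norm (x - u) \<le> c"
    and c_upper: "\<And>y s. (y, s) \<in> G \<Longrightarrow> c \<le> norm (y + u) - s"
    and "(x, r) \<in> G"
  shows "r + a * c \<le> norm (x + a *\<^sub>R u)"
proof -
  note scale = dominated_linear_graph_scaleR[OF G \<open>(x, r) \<in> G\<close>]
  consider "a = 0" | "a > 0" | "a < 0" by linarith
  then show ?thesis
  proof cases
    case 1
    then show ?thesis using dominated_linear_graph_le_norm[OF G(1) \<open>(x, r) \<in> G\<close>] by simp
  next
    case 2
    have "a * c \<le> a * (norm (inverse a *\<^sub>R x + u) - inverse a * r)"
      using c_upper[OF scale[of "inverse a"]] 2 by (intro mult_left_mono) auto
    also have "\<dots> = norm (a *\<^sub>R (inverse a *\<^sub>R x + u)) - r"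
      using 2 by (simp add: right_diff_distrib)
    finally show ?thesis using 2 by (simp add: algebra_simps)
  next
    case 3
    have "- a * (inverse (- a) * r - norm (inverse (- a) *\<^sub>R x - u)) \<le> - a * c"
      using c_lower[OF scale[of "inverse (- a)"]] 3 by (intro mult_left_mono) auto
    moreover have "- a * norm (inverse (- a) *\<^sub>R x - u) = norm ((- a) *\<^sub>R (inverse (- a) *\<^sub>R x - u))"
      using 3 by simp
    ultimately show ?thesis using 3 by (simp add: algebra_simps)
  qed
qed

lemma dominated_linear_graph_extend:
  assumes G: "dominated_linear_graph G" "G \<noteq> {}" and u: "\<forall>r. (u, r) \<notin> G"
  obtains G' where "dominated_linear_graph G'" "G \<subset> G'"
proof -
  obtain c where c_lower: "\<And>x r. (x, r) \<in> G \<Longrightarrow> r - norm (x - u) \<le> c"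
    and c_upper: "\<And>y s. (y, s) \<in> G \<Longrightarrow> c \<le> norm (y + u) - s"
    using dominated_linear_graph_extension_value[OF G] by blast
  define G' where "G' = graph_extension G u c"
  have "r' \<le> norm v" if "(v, r') \<in> G'" for v r'
    using that graph_extension_le_norm[OF G c_lower c_upper]
    unfolding G'_def graph_extension_def by blast
  then have "dominated_linear_graph G'"
    unfolding dominated_linear_graph_def G'_def
    using graph_extension_unique[OF G u] graph_extension_lincomb[OF G(1)] by blast
  moreover have "(x, r) \<in> G'" if "(x, r) \<in> G" for x r
    using that unfolding G'_def graph_extension_def by (metis (mono_tags, lifting) add.right_neutral
        mem_Collect_eq mult_zero_left scaleR_zero_left)
  moreover obtain x r where "(x, r) \<in> G" using G(2) by auto
  then have "(u, c) \<in> G'"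
    using dominated_linear_graph_scaleR[OF G, of x r 0] unfolding G'_def graph_extension_def
    by (metis (mono_tags, lifting) add_0 mem_Collect_eq mult_1 scaleR_one scaleR_zero_left mult_zero_left)
  ultimately have "dominated_linear_graph G' \<and> G \<subset> G'"
    using u by auto
  then show ?thesis using that by blast
qed

lemma exists_total_dominated_linear_graph:
  fixes w :: "'v::real_normed_vector"
  obtains M where "dominated_linear_graph M" "(w, norm w) \<in> M" "\<And>v. \<exists>r. (v, r) \<in> M"
proof -
  define line where "line = {(a *\<^sub>R w, a * norm w) | a. True}"
  define \<G> where "\<G> = {G. dominated_linear_graph G \<and> line \<subseteq> G}"
  have "line \<in> \<G>" unfolding \<G>_def line_def using dominated_linear_graph_line by blast
  have "\<forall>C\<in>chains \<G>. \<exists>U\<in>\<G>. \<forall>X\<in>C. X \<subseteq> U"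
  proof
    fix C assume C: "C \<in> chains \<G>"
    show "\<exists>U\<in>\<G>. \<forall>X\<in>C. X \<subseteq> U"
    proof (cases "C = {}")
      case True
      then show ?thesis using \<open>line \<in> \<G>\<close> by blast
    next
      case False
      then have "\<Union>C \<in> \<G>"
        using C dominated_linear_graph_chain_Union[of C] unfolding chains_def \<G>_def by blast
      then show ?thesis by blast
    qed
  qed
  then obtain M where M: "M \<in> \<G>" and maximal: "\<And>X. X \<in> \<G> \<Longrightarrow> M \<subseteq> X \<Longrightarrow> X = M"
    using Zorn_Lemma2 by force
  have graph: "dominated_linear_graph M" and wM: "(w, norm w) \<in> M"
    using M unfolding \<G>_def line_def by (auto intro: exI[of _ 1])
  have "\<exists>r. (v, r) \<in> M" for v
  proof (rule ccontr)
    assume "\<nexists>r. (v, r) \<in> M"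
    then obtain M' where "dominated_linear_graph M'" "M \<subset> M'"
      using dominated_linear_graph_extend[OF graph] wM by blast
    then show False using maximal[of M'] M unfolding \<G>_def by blast
  qed
  then show ?thesis using that graph wM by blast
qed

lemma total_dominated_linear_graph_blinfun:
  fixes M :: "('v::real_normed_vector \<times> real) set"
  assumes graph: "dominated_linear_graph M" and total: "\<And>v. \<exists>r. (v, r) \<in> M"
  obtains f :: "'v \<Rightarrow>\<^sub>L real" where "\<And>v. \<bar>f v\<bar> \<le> norm v" and "\<And>v r. (v, r) \<in> M \<Longrightarrow> f v = r"
proof -
  define g where "g v = (THE r. (v, r) \<in> M)" for v
  have gM: "(v, g v) \<in> M" for v
    unfolding g_def using total[of v] dominated_linear_graph_unique[OF graph] by (metis theI)
  have g_eq: "g v = r" if "(v, r) \<in> M" for v r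
    using dominated_linear_graph_unique[OF graph gM that] .
  have g_lincomb: "g (a *\<^sub>R x + y) = a * g x + g y" for a x y
    using g_eq[OF dominated_linear_graph_lincomb[OF graph gM gM]] .
  have g_scaleR: "g (a *\<^sub>R x) = a * g x" for a x
    using g_eq[OF dominated_linear_graph_scaleR[OF graph _ gM]] gM by blast
  have g_le: "g v \<le> norm v" for v
    using dominated_linear_graph_le_norm[OF graph gM] .
  have g_abs: "\<bar>g v\<bar> \<le> norm v" for v
    using g_le[of v] g_le[of "- v"] g_scaleR[of "-1" v] by simp
  have "bounded_linear g"
    by (rule bounded_linear_intro[where K = 1])
      (use g_lincomb[of 1] g_scaleR g_abs in auto)
  then show ?thesis
    using that[of "Blinfun g"] g_abs g_eq by (simp add: bounded_linear_Blinfun_apply)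
qed

lemma norming_functional:
  fixes w :: "'v::real_normed_vector"
  obtains f :: "'v \<Rightarrow>\<^sub>L real" where "\<And>v. \<bar>f v\<bar> \<le> norm v" and "f w = norm w"
proof -
  obtain M where "dominated_linear_graph M" "(w, norm w) \<in> M" "\<And>v. \<exists>r. (v, r) \<in> M"
    using exists_total_dominated_linear_graph by blast
  then show ?thesis
    using total_dominated_linear_graph_blinfun that by metis
qed

lemma eq_if_functionals_eq:
  fixes u v :: "'v::real_normed_vector"
  assumes "\<And>f :: 'v \<Rightarrow>\<^sub>L real. f u = f v"
  shows "u = v"
proof -
  obtain f :: "'v \<Rightarrow>\<^sub>L real" where "f (u - v) = norm (u - v)"
    using norming_functional by blast
  then show ?thesis using assms[of f] by (simp add: blinfun.diff_right)
qed

section \<open>Cluster points in reflexive spaces\<close>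

lemma cluster_point_in_closed:
  assumes "inf (nhds a) F \<noteq> bot" "closed S" "eventually (\<lambda>q. q \<in> S) F"
  shows "a \<in> S"
proof (rule ccontr)
  assume "a \<notin> S"
  then have "eventually (\<lambda>q. q \<in> - S) (nhds a)"
    using assms(2) by (intro eventually_nhds_in_open) auto
  then have "eventually (\<lambda>q. False) (inf (nhds a) F)"
    using assms(3) unfolding eventually_inf by blast
  then show False using assms(1) by (simp add: eventually_False)
qed

text \<open>Tychonoff on the product of the intervals [-norm f, norm f] gives a weak* cluster point p
  of the sequence in the bidual, jointly with a norm cluster point of its images under B.\<close>
lemma compact_op_eval_cluster_point:
  fixes B :: "'a::real_normed_vector \<Rightarrow>\<^sub>L 'c::real_normed_vector" and xs :: "nat \<Rightarrow> 'a"
  assumes B: "compact_op B" and xs: "\<And>n. norm (xs n) \<le> 1"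
  obtains p :: "('a \<Rightarrow>\<^sub>L real) \<Rightarrow> real" and y :: 'c where "\<And>f. \<bar>p f\<bar> \<le> norm f"
    and "\<And>S. closed S \<Longrightarrow>
      eventually (\<lambda>n. ((\<lambda>f::'a \<Rightarrow>\<^sub>L real. f (xs n)), B (xs n)) \<in> S) sequentially \<Longrightarrow> (p, y) \<in> S"
proof -
  define K :: "(('a \<Rightarrow>\<^sub>L real) \<Rightarrow> real) set" where "K = PiE UNIV (\<lambda>f. {- norm f .. norm f})"
  have "compact K" unfolding K_def
    using compactin_PiE[of "\<lambda>f. euclidean" UNIV "\<lambda>f::'a \<Rightarrow>\<^sub>L real. {-norm f..norm f}"]
    by (simp add: euclidean_product_topology)
  define KB where "KB = closure (B ` cball 0 1)"
  have "compact (K \<times> KB)"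
    using \<open>compact K\<close> B unfolding compact_op_def KB_def by (rule compact_Times)
  define Q where "Q n = ((\<lambda>f::'a \<Rightarrow>\<^sub>L real. f (xs n)), B (xs n))" for n
  have "Q n \<in> K \<times> KB" for n
  proof -
    have "\<bar>f (xs n)\<bar> \<le> norm f" for f :: "'a \<Rightarrow>\<^sub>L real"
      using norm_blinfun[of f "xs n"] xs[of n] mult_left_le[of "norm (xs n)" "norm f"] by simp
    then have "(\<lambda>f::'a \<Rightarrow>\<^sub>L real. f (xs n)) \<in> K" unfolding K_def by (force simp: abs_le_iff)
    moreover have "B (xs n) \<in> KB"
      unfolding KB_def using xs[of n] by (intro closure_subset[THEN subsetD]) auto
    ultimately show ?thesis unfolding Q_def by simp
  qed
  then have "eventually (\<lambda>q. q \<in> K \<times> KB) (filtermap Q sequentially)"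
    by (simp add: eventually_filtermap)
  then obtain a where "a \<in> K \<times> KB" and cluster: "inf (nhds a) (filtermap Q sequentially) \<noteq> bot"
    using compact_filter[THEN iffD1, OF \<open>compact (K \<times> KB)\<close>, rule_format, of "filtermap Q sequentially"]
    by (auto simp: filtermap_bot_iff)
  obtain p y where a: "a = (p, y)" by fastforce
  have "\<bar>p f\<bar> \<le> norm f" for f
    using \<open>a \<in> K \<times> KB\<close> a unfolding K_def by (simp add: PiE_iff abs_le_iff) (metis minus_le_iff)
  moreover have "(p, y) \<in> S" if "closed S" "eventually (\<lambda>n. Q n \<in> S) sequentially" for S
    using cluster_point_in_closed[OF cluster that(1)] that(2) a unfolding eventually_filtermap by simp
  ultimately show ?thesis using that unfolding Q_def by blast
qed

lemma continuous_on_fst_apply: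
  "continuous_on UNIV (\<lambda>q::('a \<Rightarrow> 'b::topological_space) \<times> 'c::topological_space. fst q a)"
  by (rule continuous_on_product_then_coordinatewise) (intro continuous_intros)

lemma eval_cluster_point_bounded_linear:
  fixes xs :: "nat \<Rightarrow> 'a::real_normed_vector" and Y :: "nat \<Rightarrow> 'c::real_normed_vector"
  assumes bound: "\<And>f. \<bar>p f\<bar> \<le> norm f"
    and cluster: "\<And>S. closed S \<Longrightarrow>
      eventually (\<lambda>n. ((\<lambda>f::'a \<Rightarrow>\<^sub>L real. f (xs n)), Y n) \<in> S) sequentially \<Longrightarrow> (p, y) \<in> S"
  shows "bounded_linear p"
proof -
  have "(p, y) \<in> {q. fst q (f + g) = fst q f + fst q g}" for f g
    by (intro cluster closed_Collect_eq)
      (auto intro!: continuous_intros continuous_on_fst_apply simp: blinfun.add_left)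
  moreover have "(p, y) \<in> {q. fst q (r *\<^sub>R f) = r * fst q f}" for r f
    by (intro cluster closed_Collect_eq)
      (auto intro!: continuous_intros continuous_on_fst_apply simp: blinfun.scaleR_left)
  ultimately show ?thesis
    by (intro bounded_linear_intro[where K = 1]) (use bound in auto)
qed

lemma reflexive_compact_op_cluster_point:
  fixes B :: "'a::real_normed_vector \<Rightarrow>\<^sub>L 'c::real_normed_vector" and xs :: "nat \<Rightarrow> 'a"
  assumes refl: "reflexive_space TYPE('a)" and B: "compact_op B" and xs: "\<And>n. norm (xs n) \<le> 1"
  obtains x where "norm x \<le> 1"
    and "\<And>S. closed S \<Longrightarrow> eventually (\<lambda>n. B (xs n) \<in> S) sequentially \<Longrightarrow> B x \<in> S"
proof -
  define Q where "Q n = ((\<lambda>f::'a \<Rightarrow>\<^sub>L real. f (xs n)), B (xs n))" for n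
  obtain p y where p_bound: "\<And>f. \<bar>p f\<bar> \<le> norm f"
    and in_closed: "\<And>S. closed S \<Longrightarrow> eventually (\<lambda>n. Q n \<in> S) sequentially \<Longrightarrow> (p, y) \<in> S"
    using compact_op_eval_cluster_point[where xs = xs, OF B xs] unfolding Q_def by blast
  have "bounded_linear p"
    by (rule eval_cluster_point_bounded_linear[OF p_bound in_closed[unfolded Q_def]])
  then obtain x where px: "\<And>f. p f = f x"
    using refl unfolding reflexive_space_def by (metis bounded_linear_Blinfun_apply)
  have p_limit: "p f = g y"
    if "continuous_on UNIV g" "\<And>n. f (xs n) = g (B (xs n))" for f :: "'a \<Rightarrow>\<^sub>L real" and g :: "'c \<Rightarrow> real"
  proof -
    have "(p, y) \<in> {q. fst q f = g (snd q)}"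
      by (intro in_closed closed_Collect_eq continuous_on_fst_apply continuous_on_compose2[OF that(1)])
        (auto intro!: continuous_intros simp: Q_def that(2))
    then show ?thesis by simp
  qed
  have "norm x \<le> 1"
  proof -
    obtain f :: "'a \<Rightarrow>\<^sub>L real" where f: "\<And>v. \<bar>f v\<bar> \<le> norm v" "f x = norm x"
      using norming_functional by blast
    have "f (xs n) \<le> 1" for n
      using f(1)[of "xs n"] xs[of n] by linarith
    then have "(p, y) \<in> {q. fst q f \<le> 1}"
      by (intro in_closed closed_Collect_le continuous_on_fst_apply) (auto simp: Q_def)
    then show ?thesis using px f(2) by simp
  qed
  moreover have "B x = y"
  proof (rule eq_if_functionals_eq)
    fix g :: "'c \<Rightarrow>\<^sub>L real"
    show "g (B x) = g y"
      using p_limit[where f = "g o\<^sub>L B" and g = g] px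
        linear_continuous_on[OF blinfun.bounded_linear_right]
      by simp blast
  qed
  moreover have "B x \<in> S"
    if "closed S" "eventually (\<lambda>n. B (xs n) \<in> S) sequentially" for S
    using in_closed[of "UNIV \<times> S"] that \<open>B x = y\<close> by (simp add: Q_def closed_Times)
  ultimately show ?thesis using that by blast
qed

lemma blinfun_norm_almost_attained:
  fixes B :: "'a::real_normed_vector \<Rightarrow>\<^sub>L 'b::real_normed_vector"
  assumes "e > 0"
  shows "\<exists>x. norm x \<le> 1 \<and> norm B - e < norm (B x)"
proof (rule ccontr)
  assume "\<nexists>x. norm x \<le> 1 \<and> norm B - e < norm (B x)"
  then have h: "norm (B x) \<le> norm B - e" if "norm x \<le> 1" for x
    using that not_less by blast
  have nonneg: "0 \<le> norm B - e" using h[of 0] by simp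
  have "norm (B x) \<le> (norm B - e) * norm x" for x
  proof (cases "x = 0")
    case False
    have "norm (B (inverse (norm x) *\<^sub>R x)) \<le> norm B - e" using h False by simp
    then have "inverse (norm x) * norm (B x) \<le> norm B - e" by (simp add: blinfun.scaleR_right)
    then show ?thesis using False by (simp add: field_simps)
  qed simp
  then have "norm B \<le> norm B - e" by (rule norm_blinfun_bound[OF nonneg])
  then show False using assms by simp
qed

lemma exists_almost_norming_sequence:
  fixes B :: "nat \<Rightarrow> 'a::real_normed_vector \<Rightarrow>\<^sub>L 'b::real_normed_vector"
  assumes "\<And>n. e n > 0"
  obtains xs where "\<And>n. norm (xs n) \<le> 1" and "\<And>n. norm (B n) - e n < norm (B n (xs n))"
proof -
  have "\<forall>n. \<exists>x. norm x \<le> 1 \<and> norm (B n) - e n < norm (B n x)"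
    using blinfun_norm_almost_attained assms by blast
  then obtain xs where "\<forall>n. norm (xs n) \<le> 1 \<and> norm (B n) - e n < norm (B n (xs n))"
    by (auto dest: choice)
  then show ?thesis using that by blast
qed

lemma compact_op_uminus:
  fixes A :: "'a::real_normed_vector \<Rightarrow>\<^sub>L 'b::real_normed_vector"
  assumes "compact_op A"
  shows "compact_op (- A)"
proof -
  have "(- A) ` cball 0 1 = A ` cball 0 1"
  proof (intro equalityI image_subsetI)
    fix x :: 'a assume "x \<in> cball 0 1"
    moreover have "(- A) x = A (- x)" and "A x = (- A) (- x)"
      by (simp_all add: blinfun.minus_right uminus_blinfun.rep_eq)
    ultimately show "(- A) x \<in> A ` cball 0 1" "A x \<in> (- A) ` cball 0 1"
      by (metis image_eqI mem_cball_0 norm_minus_cancel)+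
  qed
  then show ?thesis using assms unfolding compact_op_def by simp
qed

lemma compact_op_pair:
  fixes T :: "'a::real_normed_vector \<Rightarrow>\<^sub>L 'b::real_normed_vector"
    and A :: "'a \<Rightarrow>\<^sub>L 'c::real_normed_vector"
  assumes "compact_op T" "compact_op A"
  shows "compact_op (Blinfun (\<lambda>x. (T x, A x)))"
proof -
  have apply_pair: "blinfun_apply (Blinfun (\<lambda>x. (T x, A x))) = (\<lambda>x. (T x, A x))"
    by (intro bounded_linear_Blinfun_apply bounded_linear_Pair blinfun.bounded_linear_right)
  define K where "K = closure (T ` cball 0 1) \<times> closure (A ` cball 0 1)"
  have "compact K" using assms unfolding K_def compact_op_def by (rule compact_Times)
  moreover have "(\<lambda>x. (T x, A x)) ` cball 0 1 \<subseteq> K"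
    unfolding K_def by (auto intro!: closure_subset[THEN subsetD] image_eqI)
  ultimately have "closure ((\<lambda>x. (T x, A x)) ` cball 0 1) \<subseteq> K"
    by (simp add: closure_minimal compact_imp_closed)
  then have "K \<inter> closure ((\<lambda>x. (T x, A x)) ` cball 0 1) = closure ((\<lambda>x. (T x, A x)) ` cball 0 1)"
    by blast
  then show ?thesis
    unfolding compact_op_def apply_pair
    using compact_Int_closed[OF \<open>compact K\<close> closed_closure] by metis
qed

section \<open>The norm along a ray\<close>

lemma norm_add_scaleR_convex:
  fixes u v :: "'v::real_normed_vector"
  assumes "0 < r" "r \<le> s"
  shows "norm (u + r *\<^sub>R v) \<le> (1 - r / s) * norm u + (r / s) * norm (u + s *\<^sub>R v)"
proof -
  have "u + r *\<^sub>R v = (1 - r / s) *\<^sub>R u + (r / s) *\<^sub>R (u + s *\<^sub>R v)"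
    using assms by (simp add: algebra_simps)
  also have "norm \<dots> \<le> (1 - r / s) * norm u + (r / s) * norm (u + s *\<^sub>R v)"
    using norm_triangle_ineq[of "(1 - r / s) *\<^sub>R u" "(r / s) *\<^sub>R (u + s *\<^sub>R v)"] assms by simp
  finally show ?thesis .
qed

lemma norm_add_scaleR_less_of_less:
  fixes u v :: "'v::real_normed_vector"
  assumes "0 < r" "r \<le> s" and "norm (u + s *\<^sub>R v) < norm u - c * s"
  shows "norm (u + r *\<^sub>R v) < norm u - c * r"
proof -
  have "norm (u + r *\<^sub>R v) \<le> (1 - r / s) * norm u + (r / s) * norm (u + s *\<^sub>R v)"
    using norm_add_scaleR_convex[OF assms(1,2)] .
  also have "(r / s) * norm (u + s *\<^sub>R v) < (r / s) * (norm u - c * s)"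
    using assms by (intro mult_strict_left_mono) auto
  also have "(1 - r / s) * norm u + (r / s) * (norm u - c * s) = norm u - c * r"
    using assms by (simp add: field_simps)
  finally show ?thesis by simp
qed

text \<open>If the linear bound failed at some t, convexity would push the norm below
  norm u - k r with k > c for all small r > 0, contradicting the quadratic bound as r \<rightarrow> 0.\<close>
lemma norm_add_scaleR_ge_of_sq_ge:
  fixes u v :: "'v::real_normed_vector"
  assumes u: "norm u > 0" and c: "c \<ge> 0"
    and sq: "\<And>t. t > 0 \<Longrightarrow> (norm u)\<^sup>2 - 2 * norm u * c * t \<le> (norm (u + t *\<^sub>R v))\<^sup>2"
    and t: "t > 0"
  shows "norm u - c * t \<le> norm (u + t *\<^sub>R v)"
proof (rule ccontr)
  define N where "N = norm u"
  define L where "L r = norm (u + r *\<^sub>R v)" for r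
  assume "\<not> ?thesis"
  then have less: "L t < N - c * t" unfolding L_def N_def by simp
  define k where "k = (N - L t) / t"
  define \<eta> where "\<eta> = k - c"
  have \<eta>: "\<eta> > 0" unfolding \<eta>_def k_def using less t by (simp add: field_simps)
  have k: "k > 0" using c \<eta> unfolding \<eta>_def by simp
  have N: "N > 0" using u N_def by simp
  define r where "r = min t (N * \<eta> / k\<^sup>2)"
  have r: "r > 0" "r \<le> t" "r * k\<^sup>2 \<le> N * \<eta>"
    unfolding r_def using t N \<eta> k by (auto simp: min_def field_simps)
  have "L r \<le> (1 - r / t) * N + (r / t) * L t"
    unfolding L_def N_def using norm_add_scaleR_convex[OF r(1,2)] .
  also have "\<dots> = N - r * k" using t by (simp add: k_def field_simps)
  finally have Lr: "L r \<le> N - r * k" .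
  have "r * k * k \<le> N * \<eta>" using r(3) by (simp add: power2_eq_square mult.assoc)
  also have "\<dots> \<le> N * k" using N c unfolding \<eta>_def by (intro mult_left_mono) auto
  finally have "r * k \<le> N" using k by simp
  then have "(L r)\<^sup>2 \<le> (N - r * k)\<^sup>2" using Lr by (intro power_mono) (auto simp: L_def)
  moreover have "N\<^sup>2 - 2 * N * c * r \<le> (L r)\<^sup>2" using sq[OF r(1)] unfolding L_def N_def .
  ultimately have "2 * N * \<eta> * r \<le> r * (r * k\<^sup>2)"
    unfolding \<eta>_def by (simp add: power2_eq_square algebra_simps)
  then have "r * (2 * (N * \<eta>)) \<le> r * (r * k\<^sup>2)" by (simp add: algebra_simps)
  then have "2 * (N * \<eta>) \<le> r * k\<^sup>2" using r(1) by (simp add: mult_le_cancel_left_pos)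
  moreover have "N * \<eta> > 0" using N \<eta> by simp
  ultimately show False using r(3) by linarith
qed

lemma sq_ge_of_ge_diff:
  fixes a b N :: real
  assumes "0 \<le> N" "0 \<le> b" "0 \<le> a" "N - b \<le> a"
  shows "N\<^sup>2 - 2 * N * b \<le> a\<^sup>2"
proof (cases "b \<le> N")
  case True
  then have "(N - b)\<^sup>2 \<le> a\<^sup>2" using assms by (intro power_mono) auto
  moreover have "(N - b)\<^sup>2 = N\<^sup>2 - 2 * N * b + b\<^sup>2" by (simp add: power2_diff)
  ultimately show ?thesis using zero_le_power2[of b] by linarith
next
  case False
  then have "N * (N - 2 * b) \<le> 0" using assms by (intro mult_nonneg_nonpos) auto
  moreover have "N\<^sup>2 - 2 * N * b = N * (N - 2 * b)" by (simp add: power2_eq_square algebra_simps)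
  ultimately show ?thesis using zero_le_power2[of a] by linarith
qed

lemma norm_add_scaleR_ge_of_small_step:
  fixes u v :: "'v::real_normed_vector"
  assumes r: "0 < r" "r \<le> s" and u: "norm u \<le> N" and low: "N - c * r - r\<^sup>2 \<le> norm (u + r *\<^sub>R v)"
  shows "N - c * s - r * s \<le> norm (u + s *\<^sub>R v)"
proof -
  have "s * norm (u + r *\<^sub>R v) \<le> (s - r) * norm u + r * norm (u + s *\<^sub>R v)"
    using norm_add_scaleR_convex[OF r, of u v] r by (simp add: field_simps)
  also have "(s - r) * norm u \<le> (s - r) * N" using u r by (intro mult_left_mono) auto
  finally have "s * norm (u + r *\<^sub>R v) \<le> (s - r) * N + r * norm (u + s *\<^sub>R v)" by simp
  moreover have "s * (N - c * r - r\<^sup>2) \<le> s * norm (u + r *\<^sub>R v)"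
    using low r by (intro mult_left_mono) auto
  ultimately have "r * (N - c * s - r * s) \<le> r * norm (u + s *\<^sub>R v)"
    by (simp add: algebra_simps power2_eq_square)
  then show ?thesis using r(1) by (simp add: mult_le_cancel_left_pos)
qed

lemma eventually_norm_add_scaleR_ge:
  fixes u v :: "nat \<Rightarrow> 'v::real_normed_vector"
  assumes t: "t \<longlonglongrightarrow> 0" "\<And>n. t n > 0"
    and u: "\<And>n. norm (u n) \<le> N" and v: "\<And>n. norm (v n) \<le> M"
    and low: "\<And>n. N - c * t n - (t n)\<^sup>2 \<le> norm (u n + t n *\<^sub>R v n)"
    and s: "0 \<le> s" and \<delta>: "0 < \<delta>"
  shows "eventually (\<lambda>n. N - c * s - \<delta> \<le> norm (u n + s *\<^sub>R v n)) sequentially"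
proof (cases "s = 0")
  case True
  have "(\<lambda>n. t n * (c + t n + M)) \<longlonglongrightarrow> 0 * (c + 0 + M)"
    by (intro tendsto_intros t(1))
  then have "eventually (\<lambda>n. t n * (c + t n + M) < \<delta>) sequentially"
    using \<delta> by (simp add: order_tendstoD(2))
  moreover have "N - \<delta> \<le> norm (u n)" if "t n * (c + t n + M) < \<delta>" for n
  proof -
    have "norm (u n + t n *\<^sub>R v n) \<le> norm (u n) + t n * norm (v n)"
      using norm_triangle_ineq[of "u n" "t n *\<^sub>R v n"] t(2)[of n] by simp
    moreover have "t n * norm (v n) \<le> t n * M"
      using v[of n] t(2)[of n] by (intro mult_left_mono) auto
    ultimately show ?thesis using low[of n] that by (simp add: algebra_simps power2_eq_square)
  qed
  ultimately show ?thesis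
    using True by (auto elim!: eventually_mono)
next
  case False
  then have s: "s > 0" using s by simp
  have "eventually (\<lambda>n. t n < min s (\<delta> / s)) sequentially"
    using s \<delta> by (intro order_tendstoD(2)[OF t(1)]) simp
  moreover have "N - c * s - \<delta> \<le> norm (u n + s *\<^sub>R v n)" if tn: "t n < min s (\<delta> / s)" for n
  proof -
    have r: "0 < t n" "t n \<le> s" "t n * s < \<delta>"
      using tn t(2)[of n] s by (auto simp: pos_less_divide_eq)
    then show ?thesis using norm_add_scaleR_ge_of_small_step[OF r(1,2) u low] by linarith
  qed
  ultimately show ?thesis by (auto elim!: eventually_mono)
qed

section \<open>Directions of slow descent\<close>

definition ray_bounded :: "('a::real_normed_vector \<Rightarrow>\<^sub>L 'b::real_normed_vector) \<Rightarrow> ('a \<Rightarrow>\<^sub>L 'b) \<Rightarrow> real \<Rightarrow> 'a set" where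
  "ray_bounded T B c = {x. \<forall>s>0. norm T - c * s \<le> norm (T x + s *\<^sub>R B x)}"

lemma closed_ray_bounded: "closed (ray_bounded T B c)"
proof -
  have "ray_bounded T B c = (\<Inter>s\<in>{0<..}. {x. norm T - c * s \<le> norm (T x + s *\<^sub>R B x)})"
    unfolding ray_bounded_def by auto
  also have "closed \<dots>"
    by (intro closed_INT ballI closed_Collect_le) (auto intro!: continuous_intros)
  finally show ?thesis .
qed

lemma uminus_in_ray_bounded_iff:
  fixes T B :: "'a::real_normed_vector \<Rightarrow>\<^sub>L 'b::real_normed_vector"
  shows "- x \<in> ray_bounded T B c \<longleftrightarrow> x \<in> ray_bounded T B c"
proof -
  have "T (- x) + s *\<^sub>R B (- x) = - (T x + s *\<^sub>R B x)" for s
    by (simp add: blinfun.minus_right)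
  then have "norm (T (- x) + s *\<^sub>R B (- x)) = norm (T x + s *\<^sub>R B x)" for s
    by (simp only: norm_minus_cancel)
  then show ?thesis unfolding ray_bounded_def by simp
qed

text \<open>If both rays descended too fast, so would they at a common small step r, and then
  2 T x = (T x + r A x) + (T x - r A x) would be too short.\<close>
lemma ray_bounded_Un_uminus:
  fixes T A :: "'a::real_normed_vector \<Rightarrow>\<^sub>L 'b::real_normed_vector"
  assumes "norm (T x) = norm T" "c \<ge> 0"
  shows "x \<in> ray_bounded T A c \<union> ray_bounded T (- A) c"
proof (rule ccontr)
  assume "x \<notin> ray_bounded T A c \<union> ray_bounded T (- A) c"
  then obtain s1 s2 where s1: "s1 > 0" "norm (T x + s1 *\<^sub>R A x) < norm (T x) - c * s1"
    and s2: "s2 > 0" "norm (T x + s2 *\<^sub>R (- A) x) < norm (T x) - c * s2"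
    unfolding ray_bounded_def assms(1) by (auto simp: not_le)
  define r where "r = min s1 s2"
  have r: "r > 0" "r \<le> s1" "r \<le> s2" unfolding r_def using s1 s2 by auto
  have "2 * norm (T x) = norm ((T x + r *\<^sub>R A x) + (T x + r *\<^sub>R (- A) x))"
    by (simp add: uminus_blinfun.rep_eq flip: scaleR_2)
  also have "\<dots> \<le> norm (T x + r *\<^sub>R A x) + norm (T x + r *\<^sub>R (- A) x)"
    by (rule norm_triangle_ineq)
  also have "\<dots> < 2 * (norm (T x) - c * r)"
    using norm_add_scaleR_less_of_less[OF r(1,2) s1(2)]
      norm_add_scaleR_less_of_less[OF r(1,3) s2(2)] by simp
  finally show False using mult_nonneg_nonneg[OF assms(2) less_imp_le[OF r(1)]] by (simp add: algebra_simps)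
qed

lemma norm_ge_of_ray_bounded_both:
  fixes T A :: "'a::real_normed_vector \<Rightarrow>\<^sub>L 'b::real_normed_vector"
  assumes "x \<in> ray_bounded T A c" "x \<in> ray_bounded T (- A) c" "norm (T x) = norm T"
  shows "norm T - c * \<bar>t\<bar> \<le> norm (T x + t *\<^sub>R A x)"
proof -
  consider "t = 0" | "t > 0" | "t < 0" by linarith
  then show ?thesis
  proof cases
    case 3
    have "\<forall>s>0. norm T - c * s \<le> norm (T x + s *\<^sub>R (- A) x)"
      using assms(2) unfolding ray_bounded_def by simp
    from spec[OF this, of "- t"] 3 show ?thesis by (simp add: uminus_blinfun.rep_eq)
  qed (use assms in \<open>auto simp: ray_bounded_def\<close>)
qed

lemma exists_norm_att_ray_bounded:
  fixes T A :: "'a::real_normed_vector \<Rightarrow>\<^sub>L 'b::real_normed_vector"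
  assumes refl: "reflexive_space TYPE('a)" and T: "compact_op T" and A: "compact_op A"
    and "norm T > 0" and "c \<ge> 0"
    and ray: "\<And>t. t > 0 \<Longrightarrow> norm T - c * t \<le> norm (T + t *\<^sub>R A)"
  obtains x where "x \<in> norm_att T" "x \<in> ray_bounded T A c"
proof -
  define t where "t n = inverse (real (Suc n))" for n
  have t_pos: "t n > 0" for n unfolding t_def by simp
  obtain xs where xs: "\<And>n. norm (xs n) \<le> 1"
    and almost: "\<And>n. norm (T + t n *\<^sub>R A) - (t n)\<^sup>2 < norm ((T + t n *\<^sub>R A) (xs n))"
    using exists_almost_norming_sequence[where e = "\<lambda>n. (t n)\<^sup>2" and B = "\<lambda>n. T + t n *\<^sub>R A"] t_pos
    by (metis zero_less_power)
  have low: "norm T - c * t n - (t n)\<^sup>2 \<le> norm (T (xs n) + t n *\<^sub>R A (xs n))" for n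
    using almost[of n] ray[OF t_pos[of n]] by (simp add: blinfun.add_left blinfun.scaleR_left)
  have T_le: "norm (T (xs n)) \<le> norm T" and A_le: "norm (A (xs n)) \<le> norm A" for n
    using norm_blinfun[of T "xs n"] norm_blinfun[of A "xs n"] xs[of n]
      mult_left_le[of "norm (xs n)" "norm T"] mult_left_le[of "norm (xs n)" "norm A"] by auto
  define P where "P = Blinfun (\<lambda>x. (T x, A x))"
  have P: "P x = (T x, A x)" for x
    unfolding P_def
    by (simp add: bounded_linear_Blinfun_apply bounded_linear_Pair blinfun.bounded_linear_right)
  obtain x where "norm x \<le> 1" and cluster:
    "\<And>S. closed S \<Longrightarrow> eventually (\<lambda>n. P (xs n) \<in> S) sequentially \<Longrightarrow> P x \<in> S"
    using reflexive_compact_op_cluster_point[where xs = xs, OF refl compact_op_pair[OF T A] xs]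
    unfolding P_def by blast
  have bound: "norm T - c * s \<le> norm (T x + s *\<^sub>R A x)" if "s \<ge> 0" for s
  proof (rule field_le_epsilon)
    fix \<delta> :: real assume "\<delta> > 0"
    have "(T x, A x) \<in> {q. norm T - c * s - \<delta> \<le> norm (fst q + s *\<^sub>R snd q)}"
      using eventually_norm_add_scaleR_ge[OF LIMSEQ_inverse_real_of_nat[folded t_def] t_pos
          T_le A_le low that \<open>\<delta> > 0\<close>]
      unfolding P[symmetric] by (intro cluster closed_Collect_le) (auto simp: P intro!: continuous_intros)
    then show "norm T - c * s \<le> norm (T x + s *\<^sub>R A x) + \<delta>" by simp
  qed
  have "norm T \<le> norm (T x)" using bound[of 0] by simp
  moreover have "norm (T x) \<le> norm T * norm x" by (rule norm_blinfun)
  ultimately have "norm T * 1 \<le> norm T * norm x" by simp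
  then have "norm x = 1"
    using \<open>norm x \<le> 1\<close> \<open>norm T > 0\<close> by (simp add: mult_le_cancel_left_pos)
  then have "x \<in> norm_att T"
    using \<open>norm T \<le> norm (T x)\<close> \<open>norm (T x) \<le> norm T * norm x\<close> unfolding norm_att_def by simp
  moreover have "x \<in> ray_bounded T A c"
    using bound unfolding ray_bounded_def by simp
  ultimately show ?thesis using that by blast
qed

lemma ray_bounded_meets:
  fixes T B :: "'a::real_normed_vector \<Rightarrow>\<^sub>L 'b::real_normed_vector" and D :: "'a set"
  assumes refl: "reflexive_space TYPE('a)" and T: "compact_op T" and B: "compact_op B"
    and "norm T > 0" and c: "c \<ge> 0" and M_T: "norm_att T = D \<union> uminus ` D"
    and sq: "\<And>t. t > 0 \<Longrightarrow> (norm T)\<^sup>2 - 2 * norm T * c * t \<le> (norm (T + t *\<^sub>R B))\<^sup>2"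
  shows "ray_bounded T B c \<inter> D \<noteq> {}"
proof -
  have "norm T - c * t \<le> norm (T + t *\<^sub>R B)" if "t > 0" for t
    by (rule norm_add_scaleR_ge_of_sq_ge[OF \<open>norm T > 0\<close> c sq that])
  then obtain x where "x \<in> norm_att T" and x: "x \<in> ray_bounded T B c"
    using exists_norm_att_ray_bounded[OF refl T B \<open>norm T > 0\<close> c] by blast
  then have "x \<in> D \<or> - x \<in> D" using M_T by auto
  then show ?thesis using x uminus_in_ray_bounded_iff[of x T B c] by blast
qed

lemma exists_norm_att_abs_bound:
  fixes T A :: "'a::real_normed_vector \<Rightarrow>\<^sub>L 'b::real_normed_vector" and D :: "'a set"
  assumes refl: "reflexive_space TYPE('a)" and T: "compact_op T" and A: "compact_op A"
    and c: "c \<ge> 0" and "D \<noteq> {}" and "connected D" and M_T: "norm_att T = D \<union> uminus ` D"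
    and sq: "\<And>t. (norm T)\<^sup>2 - 2 * norm T * c * \<bar>t\<bar> \<le> (norm (T + t *\<^sub>R A))\<^sup>2"
  obtains x where "x \<in> norm_att T" "\<And>t. norm T - c * \<bar>t\<bar> \<le> norm (T x + t *\<^sub>R A x)"
proof (cases "norm T = 0")
  case True
  obtain x where "x \<in> D" using \<open>D \<noteq> {}\<close> by blast
  then have "x \<in> norm_att T" using M_T by blast
  moreover have "norm T - c * \<bar>t\<bar> \<le> norm (T x + t *\<^sub>R A x)" for t
  proof -
    have "norm T - c * \<bar>t\<bar> \<le> 0" using True c by simp
    then show ?thesis using norm_ge_zero[of "T x + t *\<^sub>R A x"] by linarith
  qed
  ultimately show ?thesis using that by blast
next
  case False
  then have "norm T > 0" by simp
  have "(norm T)\<^sup>2 - 2 * norm T * c * t \<le> (norm (T + t *\<^sub>R A))\<^sup>2" if "t > 0" for t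
    using sq[of t] that by simp
  then have "ray_bounded T A c \<inter> D \<noteq> {}"
    by (rule ray_bounded_meets[OF refl T A \<open>norm T > 0\<close> c M_T])
  moreover have "(norm T)\<^sup>2 - 2 * norm T * c * t \<le> (norm (T + t *\<^sub>R (- A)))\<^sup>2" if "t > 0" for t
    using sq[of "- t"] that by simp
  then have "ray_bounded T (- A) c \<inter> D \<noteq> {}"
    by (rule ray_bounded_meets[OF refl T compact_op_uminus[OF A] \<open>norm T > 0\<close> c M_T])
  moreover have "D \<subseteq> ray_bounded T A c \<union> ray_bounded T (- A) c"
    using ray_bounded_Un_uminus[OF _ c] M_T unfolding norm_att_def by blast
  ultimately have "ray_bounded T A c \<inter> ray_bounded T (- A) c \<inter> D \<noteq> {}"
    using \<open>connected D\<close> closed_ray_bounded[of T A c] closed_ray_bounded[of T "- A" c]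
    unfolding connected_closed by blast
  then obtain x where x: "x \<in> D" "x \<in> ray_bounded T A c" "x \<in> ray_bounded T (- A) c"
    by blast
  then have "x \<in> norm_att T" using M_T by blast
  moreover have "norm (T x) = norm T" using \<open>x \<in> norm_att T\<close> unfolding norm_att_def by simp
  ultimately show ?thesis using that norm_ge_of_ray_bounded_both[OF x(2,3)] by blast
qed

lemma bj_eps_orth_of_norm_att:
  fixes T A :: "'a::real_normed_vector \<Rightarrow>\<^sub>L 'b::real_normed_vector"
  assumes "x \<in> norm_att T"
    and "\<And>t. (norm T)\<^sup>2 - 2 * \<epsilon> * norm T * norm (t *\<^sub>R A) \<le> (norm (T x + t *\<^sub>R A x))\<^sup>2"
  shows "bj_eps_orth \<epsilon> T A"
  unfolding bj_eps_orth_def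
proof
  fix t :: real
  have "norm (T x + t *\<^sub>R A x) = norm ((T + t *\<^sub>R A) x)"
    by (simp add: blinfun.add_left blinfun.scaleR_left)
  also have "\<dots> \<le> norm (T + t *\<^sub>R A)"
    using norm_blinfun[of "T + t *\<^sub>R A" x] assms(1) unfolding norm_att_def by simp
  finally have "(norm (T x + t *\<^sub>R A x))\<^sup>2 \<le> (norm (T + t *\<^sub>R A))\<^sup>2"
    by (intro power_mono) auto
  then show "(norm T)\<^sup>2 - 2 * \<epsilon> * norm T * norm (t *\<^sub>R A) \<le> (norm (T + t *\<^sub>R A))\<^sup>2"
    using assms(2)[of t] by linarith
qed

lemma norm_att_sq_bound_iff_bj_eps_orth:
  fixes T A :: "'a::real_normed_vector \<Rightarrow>\<^sub>L 'b::real_normed_vector"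
  assumes "x \<in> norm_att T" "x \<in> norm_att A"
  shows "(\<forall>t. (norm T)\<^sup>2 - 2 * \<epsilon> * norm T * norm (t *\<^sub>R A) \<le> (norm (T x + t *\<^sub>R A x))\<^sup>2)
    \<longleftrightarrow> bj_eps_orth \<epsilon> (T x) (A x)"
  using assms unfolding bj_eps_orth_def norm_att_def by simp

lemma exists_norm_att_sq_bound_of_bj_eps_orth:
  fixes T A :: "'a::real_normed_vector \<Rightarrow>\<^sub>L 'b::real_normed_vector" and D :: "'a set"
  assumes refl: "reflexive_space TYPE('a)" and "0 \<le> \<epsilon>" and T: "compact_op T" and A: "compact_op A"
    and "D \<noteq> {}" and "connected D" and M_T: "norm_att T = D \<union> uminus ` D"
    and "bj_eps_orth \<epsilon> T A"
  obtains x where "x \<in> norm_att T"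
    and "\<And>t. (norm T)\<^sup>2 - 2 * \<epsilon> * norm T * norm (t *\<^sub>R A) \<le> (norm (T x + t *\<^sub>R A x))\<^sup>2"
proof -
  have "(norm T)\<^sup>2 - 2 * norm T * (\<epsilon> * norm A) * \<bar>t\<bar> \<le> (norm (T + t *\<^sub>R A))\<^sup>2" for t
    using \<open>bj_eps_orth \<epsilon> T A\<close> unfolding bj_eps_orth_def by (simp add: algebra_simps)
  moreover have "0 \<le> \<epsilon> * norm A" using \<open>0 \<le> \<epsilon>\<close> by simp
  ultimately obtain x where x: "x \<in> norm_att T"
    and lin: "\<And>t. norm T - \<epsilon> * norm A * \<bar>t\<bar> \<le> norm (T x + t *\<^sub>R A x)"
    using exists_norm_att_abs_bound[OF refl T A _ \<open>D \<noteq> {}\<close> \<open>connected D\<close> M_T] by blast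
  have "(norm T)\<^sup>2 - 2 * \<epsilon> * norm T * norm (t *\<^sub>R A) \<le> (norm (T x + t *\<^sub>R A x))\<^sup>2" for t
    using sq_ge_of_ge_diff[OF norm_ge_zero _ norm_ge_zero lin[of t]] \<open>0 \<le> \<epsilon>\<close>
    by (simp add: algebra_simps)
  then show ?thesis using that x by blast
qed

theorem mainTheorem6:
  fixes T A :: "'a::banach \<Rightarrow>\<^sub>L 'b::real_normed_vector"
    and \<epsilon> :: real and D :: "'a set"
  assumes "reflexive_space TYPE('a)"
    and "0 \<le> \<epsilon>" and "\<epsilon> < 1"
    and "compact_op T" and "compact_op A"
    and "D \<noteq> {}" and "compact D" and "connected D" and "D \<subseteq> sphere 0 1"
    and "norm_att T = D \<union> uminus ` D"
  shows "(bj_eps_orth \<epsilon> T A \<longleftrightarrow>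
            (\<exists>x \<in> norm_att T. \<forall>t::real.
               (norm (blinfun_apply T x + t *\<^sub>R blinfun_apply A x))\<^sup>2
                 \<ge> (norm T)\<^sup>2 - 2 * \<epsilon> * norm T * norm (t *\<^sub>R A)))
       \<and> (norm_att T \<subseteq> norm_att A \<longrightarrow>
            (bj_eps_orth \<epsilon> T A \<longleftrightarrow>
              (\<exists>x \<in> norm_att T. bj_eps_orth \<epsilon> (blinfun_apply T x) (blinfun_apply A x))))"
proof -
  have "bj_eps_orth \<epsilon> T A \<longleftrightarrow> (\<exists>x \<in> norm_att T. \<forall>t.
      (norm T)\<^sup>2 - 2 * \<epsilon> * norm T * norm (t *\<^sub>R A) \<le> (norm (T x + t *\<^sub>R A x))\<^sup>2)"
  proof
    assume "bj_eps_orth \<epsilon> T A"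
    then obtain x where "x \<in> norm_att T"
      "\<And>t. (norm T)\<^sup>2 - 2 * \<epsilon> * norm T * norm (t *\<^sub>R A) \<le> (norm (T x + t *\<^sub>R A x))\<^sup>2"
      using exists_norm_att_sq_bound_of_bj_eps_orth[OF assms(1,2,4-6,8,10)] by blast
    then show "\<exists>x \<in> norm_att T. \<forall>t.
        (norm T)\<^sup>2 - 2 * \<epsilon> * norm T * norm (t *\<^sub>R A) \<le> (norm (T x + t *\<^sub>R A x))\<^sup>2"
      by blast
  qed (blast intro: bj_eps_orth_of_norm_att)
  moreover have "(\<exists>x \<in> norm_att T. \<forall>t.
      (norm T)\<^sup>2 - 2 * \<epsilon> * norm T * norm (t *\<^sub>R A) \<le> (norm (T x + t *\<^sub>R A x))\<^sup>2)
    \<longleftrightarrow> (\<exists>x \<in> norm_att T. bj_eps_orth \<epsilon> (T x) (A x))" if "norm_att T \<subseteq> norm_att A"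
  proof (rule bex_cong[OF refl])
    fix x assume "x \<in> norm_att T"
    then show "(\<forall>t. (norm T)\<^sup>2 - 2 * \<epsilon> * norm T * norm (t *\<^sub>R A) \<le> (norm (T x + t *\<^sub>R A x))\<^sup>2)
      \<longleftrightarrow> bj_eps_orth \<epsilon> (T x) (A x)"
      using norm_att_sq_bound_iff_bj_eps_orth[of x T A \<epsilon>] that by blast
  qed
  ultimately show ?thesis by blast
qed

end
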